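(* Let $F=\mathbb{F}_{2^8}$, $V=F^{16}$, let $\mathsf M$ be the AES mixing layer and $t$ its order in $\mathrm{GL}(V)$, and let $\alpha:V\to(\mathbb{F}_2)^{4096t}$, $\alpha(v)=(\varepsilon(v),\varepsilon(\mathsf Mv),\dots,\varepsilon(\mathsf M^{t-1}v))$. Let $\mathcal G$ be the subgroup of $\mathrm{Sym}(V)$ generated by $\tilde{\mathcal G}$, $\bar{\mathcal G}$ and $\mathsf M$. Then $\alpha$ is a space embedding with respect to $\mathcal G$: for every $\sigma\in\mathcal G$ there exists $A_\sigma\in\mathrm{GL}((\mathbb{F}_2)^{4096t})$ with $\alpha\circ\sigma=A_\sigma\circ\alpha$.
   Context: $F=\mathbb{F}_2[x]/(x^8+x^4+x^3+x+1)$; write $\bar x$ for the class of $x$. $V=F^{16}$ is viewed as an $\mathbb{F}_2$-space of dimension 128, with elements $(s_0,\dots,s_{15})$. ShiftRows is $(s_0,\dots,s_{15})\mapsto(s_0,s_5,s_{10},s_{15},s_4,s_9,s_{14},s_3,s_8,s_{13},s_2,s_7,s_{12},s_1,s_6,s_{11})$. MixColumns replaces each column $(s_{4c},s_{4c+1},s_{4c+2},s_{4c+3})^T$, $c=0,1,2,3$, by $C(s_{4c},\dots,s_{4c+3})^T$ with $C=\begin{pmatrix}\bar x&\bar x+1&1&1\\1&\bar x&\bar x+1&1\\1&1&\bar x&\bar x+1\\\bar x+1&1&1&\bar x\end{pmatrix}$. The AES mixing layer is $\mathsf M=\text{MixColumns}\circ\text{ShiftRows}$ (ShiftRows applied first).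 Let $\gamma$ be a primitive element of $F$, $e_1,\dots,e_{256}$ the standard basis of $(\mathbb{F}_2)^{256}$, $\varepsilon':F\to(\mathbb{F}_2)^{256}$ given by $\varepsilon'(0)=e_1$, $\varepsilon'(\gamma^i)=e_{i+1}$ ($1\le i\le255$), and $\varepsilon(y_1,\dots,y_{16})=(\varepsilon'(y_1),\dots,\varepsilon'(y_{16}))\in(\mathbb{F}_2)^{4096}$. $\tilde{\mathcal G}$ is the set of maps $(y_1,\dots,y_{16})\mapsto(ay_1+c,\dots,ay_{16}+c)$ with $a\in F\setminus\{0\}$, $c\in F$; $\bar{\mathcal G}$ is the set of translations $v\mapsto v+d$, $d\in V$. *)

theory Defs
  imports "HOL-Library.Z2" "HOL-Computational_Algebra.Polynomial"
    "HOL-Algebra.Bij" "HOL-Algebra.Generated_Groups" "Jordan_Normal_Form.Matrix"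
begin

definition aes_poly :: "bit poly" where
  "aes_poly = [:1, 1, 0, 1, 1, 0, 0, 0, 1:]"

definition GF :: "bit poly set" where
  "GF = {p. degree p < 8}"

definition gf_mul :: "bit poly \<Rightarrow> bit poly \<Rightarrow> bit poly" where
  "gf_mul p q = (p * q) mod aes_poly"

definition gf_pow :: "bit poly \<Rightarrow> nat \<Rightarrow> bit poly" where
  "gf_pow p n = (p ^ n) mod aes_poly"

definition xbar :: "bit poly" where
  "xbar = [:0, 1:]"

definition gf_primitive :: "bit poly \<Rightarrow> bool" where
  "gf_primitive g \<longleftrightarrow> g \<in> GF \<and> g \<noteq> 0 \<and>
     (\<forall>y \<in> GF. y \<noteq> 0 \<longrightarrow> (\<exists>i. y = gf_pow g i))"

definition AES_V :: "(nat \<Rightarrow> bit poly) set" where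
  "AES_V = {s. (\<forall>i<16. s i \<in> GF) \<and> (\<forall>i\<ge>16. s i = 0)}"

definition shift_perm :: "nat list" where
  "shift_perm = [0,5,10,15,4,9,14,3,8,13,2,7,12,1,6,11]"

definition shift_rows :: "(nat \<Rightarrow> bit poly) \<Rightarrow> (nat \<Rightarrow> bit poly)" where
  "shift_rows s = (\<lambda>i. if i < 16 then s (shift_perm ! i) else 0)"

definition mc_coef :: "nat \<Rightarrow> nat \<Rightarrow> bit poly" where
  "mc_coef r k = (let d = (k + 4 - r) mod 4 in
     if d = 0 then xbar else if d = 1 then xbar + 1 else 1)"

definition mix_columns :: "(nat \<Rightarrow> bit poly) \<Rightarrow> (nat \<Rightarrow> bit poly)" where
  "mix_columns s = (\<lambda>i. if i < 16 then
      (\<Sum>k<4. gf_mul (mc_coef (i mod 4) k) (s (4 * (i div 4) + k))) else 0)"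

definition aes_M :: "(nat \<Rightarrow> bit poly) \<Rightarrow> (nat \<Rightarrow> bit poly)" where
  "aes_M = mix_columns \<circ> shift_rows"

definition aes_order :: nat where
  "aes_order = (LEAST n. 0 < n \<and> (\<forall>v \<in> AES_V. (aes_M ^^ n) v = v))"

definition eps' :: "bit poly \<Rightarrow> bit poly \<Rightarrow> nat \<Rightarrow> bit" where
  "eps' g y p = (if (if y = 0 then p = 0 else (1 \<le> p \<and> p \<le> 255 \<and> y = gf_pow g p))
                 then 1 else 0)"

text \<open>alpha(v) = (eps(v), eps(Mv), ..., eps(M^(t-1) v)) in F_2^(4096 t);
  coordinate k*4096 + j*256 + p is coordinate p of eps'(j-th byte of M^k v).\<close>
definition aes_alpha :: "bit poly \<Rightarrow> (nat \<Rightarrow> bit poly) \<Rightarrow> bit vec" where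
  "aes_alpha g v = vec (4096 * aes_order)
     (\<lambda>n. eps' g (((aes_M ^^ (n div 4096)) v) ((n mod 4096) div 256)) (n mod 256))"

definition G_tilde :: "((nat \<Rightarrow> bit poly) \<Rightarrow> (nat \<Rightarrow> bit poly)) set" where
  "G_tilde = {(\<lambda>s i. if i < 16 then gf_mul a (s i) + c else 0) | a c.
                 a \<in> GF \<and> a \<noteq> 0 \<and> c \<in> GF}"

definition G_bar :: "((nat \<Rightarrow> bit poly) \<Rightarrow> (nat \<Rightarrow> bit poly)) set" where
  "G_bar = {(\<lambda>s i. s i + d i) | d. d \<in> AES_V}"

definition aes_G :: "((nat \<Rightarrow> bit poly) \<Rightarrow> (nat \<Rightarrow> bit poly)) set" where
  "aes_G = generate (BijGroup AES_V) ((\<lambda>f. restrict f AES_V) ` (G_tilde \<union> G_bar \<union> {aes_M}))"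

end

theory Submission
  imports Defs "Jordan_Normal_Form.Determinant"
begin

text \<open>Every generator of G acts on alpha(v) by permuting its 4096 t coordinates, and the
  maps with this property form a group, so every sigma in G does; A_sigma is the permutation
  matrix. An affine map y \<mapsto> a y + c applied to all bytes commutes with M (M is linear and
  the rows of C sum to 1), and a translation by d becomes a translation by M^k d after k rounds.
  So on each byte of each M^k v these maps act by a bijection of F, which the one-hot
  encoding epsilon' turns into a permutation of 256 coordinates; this needs epsilon' to be a
  bijection from F onto the unit vectors, which holds because gamma is primitive. M itself
  shifts the t blocks of alpha cyclically, as M^t = 1.\<close>

section \<open>Arithmetic in F\<close>

lemma degree_aes_poly: "degree aes_poly = 8"
  by (simp add: aes_poly_def)

lemma aes_poly_nonzero: "aes_poly \<noteq> 0"
  using degree_aes_poly by auto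

lemma mod_aes_poly_eq_self: "p \<in> GF \<Longrightarrow> p mod aes_poly = p"
  by (simp add: GF_def degree_aes_poly mod_poly_less)

lemma mod_aes_poly_in_GF: "p mod aes_poly \<in> GF"
proof (cases "p mod aes_poly = 0")
  case False
  then show ?thesis
    using degree_mod_less'[OF aes_poly_nonzero False] degree_aes_poly by (simp add: GF_def)
qed (simp add: GF_def)

lemma gf_mul_in_GF: "gf_mul a b \<in> GF"
  by (simp add: gf_mul_def mod_aes_poly_in_GF)

lemma gf_pow_in_GF: "gf_pow g i \<in> GF"
  by (simp add: gf_pow_def mod_aes_poly_in_GF)

lemma GF_add: "a \<in> GF \<Longrightarrow> b \<in> GF \<Longrightarrow> a + b \<in> GF"
  unfolding GF_def using degree_add_le_max[of a b] by simp

lemma zero_in_GF: "0 \<in> GF" and one_in_GF: "1 \<in> GF"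
  by (simp_all add: GF_def)

lemma sum_mod_poly: "(\<Sum>i\<in>A. f i mod (z :: 'a :: field poly)) = sum f A mod z"
proof (induction A rule: infinite_finite_induct)
  case (insert x F)
  then show ?case by (simp add: poly_mod_add_left)
qed auto

lemma GF_eq_if_dvd_diff:
  assumes "x \<in> GF" "y \<in> GF" "aes_poly dvd x - y" shows "x = y"
proof -
  have "x mod aes_poly = y mod aes_poly" using assms(3) by (simp add: mod_eq_dvd_iff)
  then show ?thesis using assms(1,2) by (simp add: mod_aes_poly_eq_self)
qed

lemma GF_eq_Poly_image: "GF = Poly ` {xs :: bit list. length xs = 8}"
proof
  show "Poly ` {xs. length xs = 8} \<subseteq> GF"
  proof
    fix p assume "p \<in> Poly ` {xs :: bit list. length xs = 8}"
    then obtain xs where p: "p = Poly xs" and l: "length xs = 8" by auto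
    have "degree p \<le> 7" by (rule degree_le) (simp add: p l nth_default_def)
    then show "p \<in> GF" by (simp add: GF_def)
  qed
  show "GF \<subseteq> Poly ` {xs. length xs = 8}"
  proof
    fix p assume p: "p \<in> GF"
    have "p = Poly (map (coeff p) [0..<8])"
    proof (rule poly_eqI)
      fix n show "coeff p n = coeff (Poly (map (coeff p) [0..<8])) n"
        using p unfolding GF_def by (cases "n < 8") (auto simp: nth_default_def coeff_eq_0)
    qed
    then show "p \<in> Poly ` {xs. length xs = 8}" by force
  qed
qed

lemma inj_on_Poly_length: "inj_on Poly {xs. length xs = n}"
proof
  fix xs ys :: "'a :: zero list"
  assume "xs \<in> {xs. length xs = n}" "ys \<in> {xs. length xs = n}" and e: "Poly xs = Poly ys"
  then have l: "length xs = n" "length ys = n" by auto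
  show "xs = ys"
  proof (rule nth_equalityI)
    show "length xs = length ys" using l by simp
    fix i assume "i < length xs"
    then show "xs ! i = ys ! i"
      using arg_cong[OF e, of "\<lambda>p. coeff p i"] l by (simp add: nth_default_def)
  qed
qed

lemma card_GF: "card GF = 256"
proof -
  have UNIV_bit: "(UNIV :: bit set) = {0, 1}" by auto
  have "card GF = card {xs :: bit list. length xs = 8}"
    unfolding GF_eq_Poly_image by (rule card_image[OF inj_on_Poly_length])
  also have "\<dots> = card {xs :: bit list. set xs \<subseteq> UNIV \<and> length xs = 8}" by simp
  also have "\<dots> = card (UNIV :: bit set) ^ 8" by (rule card_lists_length_eq) (simp add: UNIV_bit)
  also have "card (UNIV :: bit set) = 2" by (simp add: UNIV_bit)
  finally have "card GF = 2 ^ 8" .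
  then show ?thesis by simp
qed

lemma finite_GF: "finite GF"
  using card_GF card.infinite by fastforce

lemma bij_betw_endo: "finite A \<Longrightarrow> inj_on f A \<Longrightarrow> f ` A \<subseteq> A \<Longrightarrow> bij_betw f A A"
  by (simp add: bij_betw_def endo_inj_surj)

lemma bij_betw_GF: "inj_on \<phi> GF \<Longrightarrow> (\<And>y. y \<in> GF \<Longrightarrow> \<phi> y \<in> GF) \<Longrightarrow> bij_betw \<phi> GF GF"
  using bij_betw_endo[OF finite_GF] by blast

section \<open>Units of F\<close>

definition gf_invertible :: "bit poly \<Rightarrow> bool" where
  "gf_invertible a \<longleftrightarrow> (\<exists>u. u * a mod aes_poly = 1)"

lemma gf_invertible_mult:
  assumes "gf_invertible a" "gf_invertible b" shows "gf_invertible (a * b)"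
proof -
  obtain u v where u: "u * a mod aes_poly = 1" and v: "v * b mod aes_poly = 1"
    using assms unfolding gf_invertible_def by blast
  have "(u * v) * (a * b) mod aes_poly = ((u * a mod aes_poly) * (v * b mod aes_poly)) mod aes_poly"
    by (simp add: mod_mult_eq ac_simps)
  also have "\<dots> = 1" using u v mod_aes_poly_eq_self[OF one_in_GF] by simp
  finally show ?thesis unfolding gf_invertible_def by blast
qed

lemma gf_invertible_power: "gf_invertible a \<Longrightarrow> gf_invertible (a ^ n)"
proof (induction n)
  case 0
  show ?case unfolding gf_invertible_def
    using mod_aes_poly_eq_self[OF one_in_GF] by (intro exI[of _ 1]) simp
qed (simp add: gf_invertible_mult)

lemma gf_invertible_mod_iff: "gf_invertible (a mod aes_poly) \<longleftrightarrow> gf_invertible a"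
  unfolding gf_invertible_def by (simp add: mod_mult_right_eq)

lemma gf_invertible_left_factor: "gf_invertible (a * b) \<Longrightarrow> gf_invertible a"
  unfolding gf_invertible_def by (metis mult.assoc mult.commute)

lemma gf_invertible_cancel:
  assumes "gf_invertible a" "aes_poly dvd a * x" shows "aes_poly dvd x"
proof -
  obtain u where "u * a mod aes_poly = 1 mod aes_poly"
    using assms(1) mod_aes_poly_eq_self[OF one_in_GF] unfolding gf_invertible_def by auto
  then have "aes_poly dvd u * a - 1" by (simp add: mod_eq_dvd_iff)
  then have "aes_poly dvd u * (a * x) - (u * a - 1) * x"
    using assms(2) by (simp add: dvd_diff)
  also have "u * (a * x) - (u * a - 1) * x = x" by (simp add: algebra_simps)
  finally show ?thesis .
qed

lemma gf_invertible_not_dvd: "gf_invertible a \<Longrightarrow> \<not> aes_poly dvd a"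
  using gf_invertible_cancel[of a 1] degree_aes_poly dvd_imp_degree_le[of aes_poly 1] by auto

lemma gf_invertible_xbar: "gf_invertible xbar"
proof -
  have "[:1,0,1,1,0,0,0,1:] * xbar = aes_poly + 1"
    by (simp add: aes_poly_def xbar_def one_pCons)
  then have "[:1,0,1,1,0,0,0,1:] * xbar mod aes_poly = 1"
    using mod_aes_poly_eq_self[OF one_in_GF] by (simp add: poly_mod_add_left)
  then show ?thesis unfolding gf_invertible_def by blast
qed

lemma gf_invertible_primitive: assumes "gf_primitive g" shows "gf_invertible g"
proof -
  have xbar: "xbar \<in> GF" "xbar \<noteq> 0" "xbar \<noteq> 1"
    by (auto simp: xbar_def GF_def one_pCons)
  then obtain i where i: "xbar = g ^ i mod aes_poly"
    using assms unfolding gf_primitive_def gf_pow_def by blast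
  have "i \<noteq> 0"
  proof
    assume "i = 0"
    then show False using i xbar(3) mod_aes_poly_eq_self[OF one_in_GF] by simp
  qed
  then have "g ^ i = g * g ^ (i - 1)" by (simp flip: power_Suc)
  moreover have "gf_invertible (g ^ i)"
    using gf_invertible_xbar by (simp only: i gf_invertible_mod_iff)
  ultimately show ?thesis using gf_invertible_left_factor by metis
qed

lemma gf_invertible_gf_pow: "gf_primitive g \<Longrightarrow> gf_invertible (gf_pow g i)"
  by (simp add: gf_pow_def gf_invertible_mod_iff gf_invertible_power gf_invertible_primitive)

lemma gf_invertible_nonzero:
  assumes "gf_primitive g" "a \<in> GF" "a \<noteq> 0" shows "gf_invertible a"
  using assms gf_invertible_gf_pow unfolding gf_primitive_def by blast

lemma gf_pow_nonzero: "gf_primitive g \<Longrightarrow> gf_pow g i \<noteq> 0"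
  using gf_invertible_not_dvd[OF gf_invertible_gf_pow, of g i] by auto

lemma inj_on_gf_mul: assumes "gf_invertible a" shows "inj_on (gf_mul a) GF"
proof
  fix y z assume y: "y \<in> GF" and z: "z \<in> GF" and e: "gf_mul a y = gf_mul a z"
  have "aes_poly dvd a * (y - z)"
    using e unfolding gf_mul_def by (simp add: mod_eq_dvd_iff right_diff_distrib)
  then have "aes_poly dvd y - z" using gf_invertible_cancel[OF assms] by blast
  then show "y = z" using GF_eq_if_dvd_diff y z by blast
qed

section \<open>Discrete logarithms\<close>

lemma gf_pow_period:
  assumes prim: "gf_primitive g"
  obtains m where "1 \<le> m" "m \<le> 255" "gf_pow g m = 1"
proof -
  have "\<not> inj_on (gf_pow g) {1..256}"
  proof
    assume "inj_on (gf_pow g) {1..256}"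
    moreover have "gf_pow g ` {1..256} \<subseteq> GF - {0}"
      using gf_pow_in_GF gf_pow_nonzero[OF prim] by auto
    ultimately have "card {1..256::nat} \<le> card (GF - {0})"
      using card_inj_on_le finite_GF by blast
    then show False using card_GF finite_GF zero_in_GF by simp
  qed
  then obtain a b where ab: "a \<in> {1..256}" "b \<in> {1..256}" "a < b" "gf_pow g a = gf_pow g b"
    unfolding inj_on_def by (metis linorder_neqE_nat)
  have "aes_poly dvd g ^ b - g ^ a"
    using ab(4)[symmetric] unfolding gf_pow_def by (simp add: mod_eq_dvd_iff)
  also have "g ^ b - g ^ a = g ^ a * (g ^ (b - a) - 1)"
    using ab(3) by (simp add: right_diff_distrib flip: power_add)
  finally have "aes_poly dvd g ^ (b - a) - 1"
    using gf_invertible_cancel gf_invertible_power gf_invertible_primitive[OF prim] by blast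
  then have "g ^ (b - a) mod aes_poly = 1 mod aes_poly" by (simp only: mod_eq_dvd_iff)
  then have "gf_pow g (b - a) = 1"
    using mod_aes_poly_eq_self[OF one_in_GF] by (simp add: gf_pow_def)
  moreover have "1 \<le> b - a" "b - a \<le> 255" using ab(1-3) by auto
  ultimately show thesis using that by blast
qed

lemma gf_pow_mod_period: assumes "gf_pow g m = 1" shows "gf_pow g i = gf_pow g (i mod m)"
proof -
  have "g ^ i = (g ^ m) ^ (i div m) * g ^ (i mod m)"
    by (simp only: power_mult[symmetric] power_add[symmetric] mult_div_mod_eq)
  also have "\<dots> mod aes_poly = ((g ^ m mod aes_poly) ^ (i div m) * g ^ (i mod m)) mod aes_poly"
    by (metis mod_mult_left_eq power_mod)
  finally show ?thesis
    using assms mod_aes_poly_eq_self[OF one_in_GF] by (simp add: gf_pow_def)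
qed

lemma gf_discrete_log:
  assumes prim: "gf_primitive g" and y: "y \<in> GF" "y \<noteq> 0"
  obtains p where "1 \<le> p" "p \<le> 255" "y = gf_pow g p"
proof -
  obtain i where i: "y = gf_pow g i" using prim y unfolding gf_primitive_def by blast
  obtain m where m: "1 \<le> m" "m \<le> 255" "gf_pow g m = 1" using gf_pow_period[OF prim] .
  have y_mod: "y = gf_pow g (i mod m)" using i gf_pow_mod_period[OF m(3)] by simp
  show thesis
  proof (cases "i mod m = 0")
    case True
    then show thesis using that[of m] m y_mod gf_pow_mod_period[OF m(3), of m] by simp
  next
    case False
    have "i mod m < m" using m(1) by simp
    then show thesis using that[of "i mod m"] False y_mod m(2) by simp
  qed
qed

section \<open>The one-hot encoding\<close>

lemma one_hot_transport:
  fixes e :: "'a \<Rightarrow> nat \<Rightarrow> 'b :: {zero, one}"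
  assumes idx: "bij_betw idx S {..<m}"
    and e: "\<And>y p. y \<in> S \<Longrightarrow> p < m \<Longrightarrow> e y p = (if p = idx y then 1 else 0)"
    and f: "bij_betw f S S"
  defines "\<rho> \<equiv> idx \<circ> inv_into S f \<circ> inv_into S idx"
  shows "bij_betw \<rho> {..<m} {..<m}"
    and "y \<in> S \<Longrightarrow> p < m \<Longrightarrow> e (f y) p = e y (\<rho> p)"
proof -
  show \<rho>: "bij_betw \<rho> {..<m} {..<m}"
    unfolding \<rho>_def
    by (rule bij_betw_trans[OF bij_betw_inv_into[OF idx] bij_betw_trans[OF bij_betw_inv_into[OF f] idx]])
  assume y: "y \<in> S" and p: "p < m"
  define q where "q = inv_into S idx p"
  have q: "q \<in> S" "idx q = p"
    using idx p unfolding q_def bij_betw_def by (auto intro: inv_into_into f_inv_into_f)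
  have finv: "inv_into S f q \<in> S" "f (inv_into S f q) = q"
    using f q(1) unfolding bij_betw_def by (auto intro: inv_into_into f_inv_into_f)
  have idx_inj: "inj_on idx S" and f_inj: "inj_on f S" and fy: "f y \<in> S"
    using idx f y by (auto simp: bij_betw_def)
  have "\<rho> p = idx y \<longleftrightarrow> idx (inv_into S f q) = idx y" by (simp add: \<rho>_def q_def)
  also have "\<dots> \<longleftrightarrow> inv_into S f q = y" by (rule inj_on_eq_iff[OF idx_inj finv(1) y])
  also have "\<dots> \<longleftrightarrow> q = f y" using finv(2) inv_into_f_f[OF f_inj y] by auto
  also have "\<dots> \<longleftrightarrow> p = idx (f y)" using inj_on_eq_iff[OF idx_inj q(1) fy] q(2) by simp
  finally have "\<rho> p = idx y \<longleftrightarrow> p = idx (f y)" .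
  moreover have "\<rho> p < m" using \<rho> p by (auto dest: bij_betwE)
  ultimately show "e (f y) p = e y (\<rho> p)" using e[OF y] e[OF fy p] by simp
qed

definition eps_index :: "bit poly \<Rightarrow> bit poly \<Rightarrow> nat" where
  "eps_index g y = (SOME p. p < 256 \<and> eps' g y p = 1)"

lemma eps'_eq_one_iff:
  "eps' g y p = 1 \<longleftrightarrow> (if y = 0 then p = 0 else 1 \<le> p \<and> p \<le> 255 \<and> y = gf_pow g p)"
  by (simp add: eps'_def)

lemma eps'_eq_one_unique: "eps' g y p = 1 \<Longrightarrow> eps' g z p = 1 \<Longrightarrow> y = z"
  unfolding eps'_eq_one_iff by (auto split: if_splits)

context
  fixes g assumes prim: "gf_primitive g"
begin

lemma eps_index: assumes y: "y \<in> GF" shows "eps_index g y < 256" "eps' g y (eps_index g y) = 1"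
proof -
  have "\<exists>p. p < 256 \<and> eps' g y p = 1"
  proof (cases "y = 0")
    case True
    then show ?thesis by (intro exI[of _ 0]) (simp add: eps'_eq_one_iff)
  next
    case False
    then obtain p where "1 \<le> p" "p \<le> 255" "y = gf_pow g p"
      using gf_discrete_log[OF prim y] by blast
    then show ?thesis using False by (intro exI[of _ p]) (simp add: eps'_eq_one_iff)
  qed
  then show "eps_index g y < 256" "eps' g y (eps_index g y) = 1"
    unfolding eps_index_def by (metis (mono_tags, lifting) someI_ex)+
qed

lemma bij_betw_eps_index: "bij_betw (eps_index g) GF {..<256}"
proof -
  have inj: "inj_on (eps_index g) GF"
    by (rule inj_onI) (metis eps_index(2) eps'_eq_one_unique)
  have "eps_index g ` GF \<subseteq> {..<256}" using eps_index(1) by auto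
  moreover have "card (eps_index g ` GF) = card {..<256::nat}"
    using card_image[OF inj] card_GF by simp
  ultimately have "eps_index g ` GF = {..<256}" by (simp add: card_subset_eq)
  then show ?thesis using inj by (simp add: bij_betw_def)
qed

lemma eps'_eq_indicator:
  assumes y: "y \<in> GF" and p: "p < 256"
  shows "eps' g y p = (if p = eps_index g y then 1 else 0)"
proof (cases "p = eps_index g y")
  case False
  have "eps' g y p \<noteq> 1"
  proof
    assume e: "eps' g y p = 1"
    obtain z where z: "z \<in> GF" "p = eps_index g z"
      using bij_betw_eps_index p unfolding bij_betw_def by (metis imageE lessThan_iff)
    then have "z = y" using e eps_index(2)[OF z(1)] eps'_eq_one_unique by metis
    then show False using False z by simp
  qed
  then show ?thesis using False by (simp add: eps'_def split: if_splits)
qed (simp add: eps_index(2)[OF y])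

end

section \<open>The mixing layer\<close>

lemma AES_V_component: "v \<in> AES_V \<Longrightarrow> v j \<in> GF"
  by (cases "j < 16") (auto simp: AES_V_def zero_in_GF)

lemma finite_V: "finite AES_V"
proof -
  have "AES_V \<subseteq> (\<lambda>f i. if i < 16 then f i else 0) ` (PiE {..<16} (\<lambda>_. GF))"
  proof
    fix s assume s: "s \<in> AES_V"
    have "s = (\<lambda>i. if i < 16 then restrict s {..<16} i else 0)"
      using s unfolding AES_V_def by auto
    moreover have "restrict s {..<16} \<in> PiE {..<16} (\<lambda>_. GF)"
      using s unfolding AES_V_def by auto
    ultimately show "s \<in> (\<lambda>f i. if i < 16 then f i else 0) ` (PiE {..<16} (\<lambda>_. GF))" by blast
  qed
  moreover have "finite (PiE {..<16::nat} (\<lambda>_. GF))" using finite_GF by (simp add: finite_PiE)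
  ultimately show ?thesis using finite_subset by blast
qed

definition column_map :: "(nat \<Rightarrow> nat \<Rightarrow> bit poly) \<Rightarrow> (nat \<Rightarrow> bit poly) \<Rightarrow> (nat \<Rightarrow> bit poly)" where
  "column_map K s = (\<lambda>i. if i < 16
     then (\<Sum>j<4. K (i mod 4) j * s (4 * (i div 4) + j)) mod aes_poly else 0)"

definition mat4_mult :: "(nat \<Rightarrow> nat \<Rightarrow> bit poly) \<Rightarrow> (nat \<Rightarrow> nat \<Rightarrow> bit poly) \<Rightarrow> (nat \<Rightarrow> nat \<Rightarrow> bit poly)" where
  "mat4_mult K L = (\<lambda>r j. \<Sum>k<4. K r k * L k j)"

lemma mix_columns_eq_column_map: "mix_columns = column_map mc_coef"
proof (intro ext)
  fix s i
  show "mix_columns s i = column_map mc_coef s i"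
    unfolding mix_columns_def column_map_def gf_mul_def
    using sum_mod_poly[of "\<lambda>k. mc_coef (i mod 4) k * s (4 * (i div 4) + k)" aes_poly "{..<4}"]
    by simp
qed

lemma column_map_in_V: "column_map K s \<in> AES_V"
  unfolding column_map_def AES_V_def by (simp add: mod_aes_poly_in_GF)

lemma column_index:
  assumes "(i::nat) < 16" "k < 4"
  shows "4 * (i div 4) + k < 16" "(4 * (i div 4) + k) div 4 = i div 4" "(4 * (i div 4) + k) mod 4 = k"
proof -
  have "i div 4 < 4" using assms(1) by simp
  then show "4 * (i div 4) + k < 16" using assms(2) by linarith
  show "(4 * (i div 4) + k) div 4 = i div 4" "(4 * (i div 4) + k) mod 4 = k" using assms(2) by simp_all
qed

lemma column_map_column_map: "column_map K (column_map L s) = column_map (mat4_mult K L) s"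
proof
  fix i
  show "column_map K (column_map L s) i = column_map (mat4_mult K L) s i"
  proof (cases "i < 16")
    case True
    define c where "c = i div 4"
    define r where "r = i mod 4"
    let ?P = aes_poly and ?col = "\<lambda>k. \<Sum>j<4. L k j * s (4 * c + j)"
    have inner: "column_map L s (4 * c + k) = ?col k mod ?P" if "k < 4" for k
      using column_index[OF True that] by (simp add: column_map_def c_def)
    have "column_map K (column_map L s) i = (\<Sum>k<4. K r k * column_map L s (4 * c + k)) mod ?P"
      using True by (simp add: column_map_def c_def r_def)
    also have "\<dots> = (\<Sum>k<4. K r k * (?col k mod ?P)) mod ?P"
      by (simp add: inner)
    also have "\<dots> = (\<Sum>k<4. (K r k * (?col k mod ?P)) mod ?P) mod ?P"
      by (simp add: sum_mod_poly)
    also have "\<dots> = (\<Sum>k<4. (K r k * ?col k) mod ?P) mod ?P"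
      by (simp add: mod_mult_right_eq)
    also have "\<dots> = (\<Sum>k<4. K r k * ?col k) mod ?P"
      by (simp add: sum_mod_poly)
    also have "(\<Sum>k<4. K r k * ?col k) = (\<Sum>j<4. mat4_mult K L r j * s (4 * c + j))"
      unfolding mat4_mult_def sum_distrib_left sum_distrib_right
      by (subst sum.swap) (simp add: mult.assoc)
    finally show ?thesis using True unfolding column_map_def c_def r_def by simp
  qed (simp add: column_map_def)
qed

lemma column_map_cong:
  "(\<And>r j. r < 4 \<Longrightarrow> j < 4 \<Longrightarrow> K r j = L r j) \<Longrightarrow> column_map K = column_map L"
  unfolding column_map_def by (intro ext) (auto intro!: sum.cong)

lemma column_map_identity:
  assumes "\<And>r j. r < 4 \<Longrightarrow> j < 4 \<Longrightarrow> K r j = (if r = j then 1 else 0)" and s: "s \<in> AES_V"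
  shows "column_map K s = s"
proof
  fix i
  show "column_map K s i = s i"
  proof (cases "i < 16")
    case True
    have "(\<Sum>j<4. K (i mod 4) j * s (4 * (i div 4) + j)) = s (4 * (i div 4) + i mod 4)"
      using assms(1) by (simp add: if_distrib[of "\<lambda>x. x * _"] cong: if_cong)
    then show ?thesis
      using True s mod_aes_poly_eq_self unfolding column_map_def AES_V_def by simp
  next
    case False
    then show ?thesis using s unfolding column_map_def AES_V_def by simp
  qed
qed

lemma sum_lessThan_4: "(\<Sum>k<(4::nat). f k) = f 0 + f 1 + f 2 + (f 3 :: 'a::comm_monoid_add)"
  by (simp add: eval_nat_numeral)

lemma less_4_cases: "(r::nat) < 4 \<Longrightarrow> r = 0 \<or> r = 1 \<or> r = 2 \<or> r = 3"
  by auto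

lemma mc_coef_table:
  "mc_coef 0 0 = [:0,1:]" "mc_coef 0 1 = [:1,1:]" "mc_coef 0 2 = 1" "mc_coef 0 3 = 1"
  "mc_coef 1 0 = 1" "mc_coef 1 1 = [:0,1:]" "mc_coef 1 2 = [:1,1:]" "mc_coef 1 3 = 1"
  "mc_coef 2 0 = 1" "mc_coef 2 1 = 1" "mc_coef 2 2 = [:0,1:]" "mc_coef 2 3 = [:1,1:]"
  "mc_coef 3 0 = [:1,1:]" "mc_coef 3 1 = 1" "mc_coef 3 2 = 1" "mc_coef 3 3 = [:0,1:]"
  by (simp_all add: mc_coef_def Let_def xbar_def one_pCons)

lemma mc_coef_row_sum: "r < 4 \<Longrightarrow> (\<Sum>j<4. mc_coef r j) = 1"
  by (drule less_4_cases) (elim disjE; simp only: sum_lessThan_4 mc_coef_table; simp add: one_pCons)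

text \<open>C is a polynomial in the cyclic shift P of the rows, so in characteristic 2
  C^2 = (x^2 + 1) I + x^2 P^2 and C^4 = I hold already over F_2[x].\<close>
definition mc_coef_square :: "nat \<Rightarrow> nat \<Rightarrow> bit poly" where
  "mc_coef_square r j = (if j = r then [:1,0,1:] else if j = (r + 2) mod 4 then [:0,0,1:] else 0)"

lemma mat4_mult_mc_coef: "r < 4 \<Longrightarrow> j < 4 \<Longrightarrow> mat4_mult mc_coef mc_coef r j = mc_coef_square r j"
  by (drule less_4_cases)+
    (elim disjE; simp only: mat4_mult_def sum_lessThan_4 mc_coef_square_def mc_coef_table;
      simp add: one_pCons)

lemma mat4_mult_mc_coef_square:
  "r < 4 \<Longrightarrow> j < 4 \<Longrightarrow> mat4_mult mc_coef_square mc_coef_square r j = (if r = j then 1 else 0)"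
  by (drule less_4_cases)+
    (elim disjE; simp only: mat4_mult_def sum_lessThan_4; simp add: mc_coef_square_def one_pCons)

lemma mix_columns_4:
  assumes s: "s \<in> AES_V" shows "mix_columns (mix_columns (mix_columns (mix_columns s))) = s"
proof -
  have square: "column_map mc_coef (column_map mc_coef t) = column_map mc_coef_square t" for t
    using column_map_cong[of "mat4_mult mc_coef mc_coef" mc_coef_square] mat4_mult_mc_coef
    by (simp add: column_map_column_map)
  have "mix_columns (mix_columns (mix_columns (mix_columns s)))
      = column_map mc_coef_square (column_map mc_coef_square s)"
    unfolding mix_columns_eq_column_map square ..
  also have "\<dots> = column_map (mat4_mult mc_coef_square mc_coef_square) s"
    by (rule column_map_column_map)
  also have "\<dots> = s" by (rule column_map_identity[OF mat4_mult_mc_coef_square s])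
  finally show ?thesis .
qed

lemma set_shift_perm: "set shift_perm = {..<16}"
  unfolding shift_perm_def by (auto simp: lessThan_nat_numeral)

lemma length_shift_perm: "length shift_perm = 16"
  by (simp add: shift_perm_def)

lemma shift_perm_less: "i < 16 \<Longrightarrow> shift_perm ! i < 16"
  using nth_mem[of i shift_perm] set_shift_perm length_shift_perm by auto

lemma shift_rows_in_V: "s \<in> AES_V \<Longrightarrow> shift_rows s \<in> AES_V"
  unfolding AES_V_def shift_rows_def using shift_perm_less by auto

lemma inj_on_shift_rows: "inj_on shift_rows AES_V"
proof
  fix s t assume s: "s \<in> AES_V" and t: "t \<in> AES_V" and e: "shift_rows s = shift_rows t"
  show "s = t"
  proof
    fix j
    show "s j = t j"
    proof (cases "j < 16")
      case True
      then obtain i where i: "i < 16" "shift_perm ! i = j"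
        using set_shift_perm by (metis in_set_conv_nth lessThan_iff length_shift_perm)
      show ?thesis using fun_cong[OF e, of i] i unfolding shift_rows_def by simp
    next
      case False
      then show ?thesis using s t unfolding AES_V_def by simp
    qed
  qed
qed

lemma aes_M_in_V: "s \<in> AES_V \<Longrightarrow> aes_M s \<in> AES_V"
  by (simp add: aes_M_def mix_columns_eq_column_map column_map_in_V)

lemma bij_betw_aes_M: "bij_betw aes_M AES_V AES_V"
proof -
  have "inj_on mix_columns AES_V"
    by (rule inj_on_inverseI[where g = "\<lambda>s. mix_columns (mix_columns (mix_columns s))"])
      (simp add: mix_columns_4)
  then have "inj_on aes_M AES_V"
    unfolding aes_M_def using inj_on_shift_rows shift_rows_in_V
    by (metis comp_inj_on inj_on_subset image_subsetI)
  then show ?thesis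
    using finite_V aes_M_in_V by (intro bij_betw_endo) auto
qed

lemma column_map_add: "column_map K (\<lambda>i. u i + v i) = (\<lambda>i. column_map K u i + column_map K v i)"
  unfolding column_map_def by (intro ext) (simp add: distrib_left sum.distrib poly_mod_add_left)

lemma aes_M_add: "aes_M (\<lambda>i. u i + v i) = (\<lambda>i. aes_M u i + aes_M v i)"
proof -
  have "shift_rows (\<lambda>i. u i + v i) = (\<lambda>i. shift_rows u i + shift_rows v i)"
    unfolding shift_rows_def by auto
  then show ?thesis by (simp add: aes_M_def mix_columns_eq_column_map column_map_add)
qed

definition gf_affine :: "bit poly \<Rightarrow> bit poly \<Rightarrow> (nat \<Rightarrow> bit poly) \<Rightarrow> (nat \<Rightarrow> bit poly)" where
  "gf_affine a c s = (\<lambda>i. if i < 16 then gf_mul a (s i) + c else 0)"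

lemma shift_rows_affine: "shift_rows (gf_affine a c s) = gf_affine a c (shift_rows s)"
  unfolding shift_rows_def gf_affine_def using shift_perm_less by auto

lemma column_map_affine:
  assumes rows: "\<And>r. r < 4 \<Longrightarrow> (\<Sum>j<4. K r j) = 1" and c: "c \<in> GF"
  shows "column_map K (gf_affine a c s) = gf_affine a c (column_map K s)"
proof
  fix i
  show "column_map K (gf_affine a c s) i = gf_affine a c (column_map K s) i"
  proof (cases "i < 16")
    case True
    define r where "r = i mod 4"
    define b where "b = 4 * (i div 4)"
    let ?P = aes_poly and ?col = "\<Sum>j<4. K r j * s (b + j)"
    have "column_map K (gf_affine a c s) i = (\<Sum>j<4. K r j * (gf_mul a (s (b + j)) + c)) mod ?P"
      using True column_index[OF True]
      by (auto simp: column_map_def gf_affine_def r_def b_def intro!: arg_cong[where f = "\<lambda>x. x mod ?P"] sum.cong)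
    also have "\<dots> = (\<Sum>j<4. K r j * (a * s (b + j) mod ?P)) mod ?P + ((\<Sum>j<4. K r j) * c) mod ?P"
      unfolding gf_mul_def by (simp add: distrib_left sum.distrib poly_mod_add_left sum_distrib_right)
    also have "(\<Sum>j<4. K r j) * c mod ?P = c"
      using rows[of r] mod_aes_poly_eq_self[OF c] by (simp add: r_def)
    also have "(\<Sum>j<4. K r j * (a * s (b + j) mod ?P)) mod ?P
        = (\<Sum>j<4. K r j * (a * s (b + j) mod ?P) mod ?P) mod ?P"
      by (simp add: sum_mod_poly)
    also have "\<dots> = (\<Sum>j<4. K r j * (a * s (b + j)) mod ?P) mod ?P"
      by (simp add: mod_mult_right_eq)
    also have "\<dots> = (a * ?col) mod ?P"
      by (simp add: sum_mod_poly sum_distrib_left mult.left_commute)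
    also have "\<dots> = (a * (?col mod ?P)) mod ?P"
      by (simp add: mod_mult_right_eq)
    finally show ?thesis
      using True unfolding column_map_def gf_affine_def gf_mul_def r_def b_def by simp
  qed (simp add: column_map_def gf_affine_def)
qed

lemma aes_M_affine: "c \<in> GF \<Longrightarrow> aes_M (gf_affine a c s) = gf_affine a c (aes_M s)"
  by (simp add: aes_M_def shift_rows_affine mix_columns_eq_column_map column_map_affine
      mc_coef_row_sum)

lemma funpow_aes_M_in_V: "s \<in> AES_V \<Longrightarrow> (aes_M ^^ k) s \<in> AES_V"
  by (induction k) (auto simp: aes_M_in_V)

lemma funpow_aes_M_add: "(aes_M ^^ k) (\<lambda>i. u i + v i) = (\<lambda>i. (aes_M ^^ k) u i + (aes_M ^^ k) v i)"
  by (induction k) (auto simp: aes_M_add)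

lemma funpow_aes_M_affine: "c \<in> GF \<Longrightarrow> (aes_M ^^ k) (gf_affine a c s) = gf_affine a c ((aes_M ^^ k) s)"
  by (induction k) (auto simp: aes_M_affine)

lemma funpow_period:
  assumes "finite A" "bij_betw f A A"
  shows "\<exists>n > 0. \<forall>x \<in> A. (f ^^ n) x = x"
proof -
  let ?F = "\<lambda>i. restrict (f ^^ i) A"
  have funpow_in: "(f ^^ i) x \<in> A" if "x \<in> A" for i x
    using bij_betw_funpow[OF assms(2), of i] that by (auto simp: bij_betw_def)
  then have "range ?F \<subseteq> PiE A (\<lambda>_. A)" by auto
  moreover have "finite (PiE A (\<lambda>_. A))" using assms(1) by (simp add: finite_PiE)
  ultimately have "\<not> inj ?F" using finite_subset finite_imageD infinite_UNIV_nat by blast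
  then obtain a b where ab: "a < b" "?F a = ?F b"
    unfolding inj_def by (metis linorder_neqE_nat)
  show ?thesis
  proof (intro exI conjI ballI)
    show "0 < b - a" using ab(1) by simp
    fix x assume x: "x \<in> A"
    have inj: "inj_on (f ^^ a) A" using bij_betw_funpow[OF assms(2)] by (simp add: bij_betw_def)
    have fx: "(f ^^ (b - a)) x \<in> A" using funpow_in x .
    have "(f ^^ a) ((f ^^ (b - a)) x) = (f ^^ (a + (b - a))) x"
      by (simp add: funpow_add)
    also have "\<dots> = (f ^^ b) x" using ab(1) by simp
    also have "\<dots> = (f ^^ a) x" using fun_cong[OF ab(2), of x] x by simp
    finally show "(f ^^ (b - a)) x = x" using inj_on_eq_iff[OF inj fx x] by simp
  qed
qed

lemma aes_order: "0 < aes_order" "v \<in> AES_V \<Longrightarrow> (aes_M ^^ aes_order) v = v"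
proof -
  have "0 < aes_order \<and> (\<forall>v \<in> AES_V. (aes_M ^^ aes_order) v = v)"
    unfolding aes_order_def using funpow_period[OF finite_V bij_betw_aes_M] by (rule LeastI_ex)
  then show "0 < aes_order" "v \<in> AES_V \<Longrightarrow> (aes_M ^^ aes_order) v = v" by auto
qed

section \<open>Maps acting on an encoding by coordinate permutations\<close>

definition induces_coord_perm :: "'a set \<Rightarrow> nat \<Rightarrow> ('a \<Rightarrow> 'b vec) \<Rightarrow> ('a \<Rightarrow> 'a) \<Rightarrow> bool" where
  "induces_coord_perm S n enc \<sigma> \<longleftrightarrow>
     (\<exists>\<pi>. bij_betw \<pi> {..<n} {..<n} \<and> (\<forall>v\<in>S. \<forall>i<n. enc (\<sigma> v) $ i = enc v $ \<pi> i))"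

lemma induces_coord_perm_cong:
  "induces_coord_perm S n enc \<tau> \<Longrightarrow> (\<And>v. v \<in> S \<Longrightarrow> \<sigma> v = \<tau> v) \<Longrightarrow> induces_coord_perm S n enc \<sigma>"
  unfolding induces_coord_perm_def by simp

lemma induces_coord_perm_id: "induces_coord_perm S n enc (\<lambda>v. v)"
  unfolding induces_coord_perm_def by (intro exI[of _ id]) simp

lemma induces_coord_perm_comp:
  assumes "induces_coord_perm S n enc \<sigma>" "induces_coord_perm S n enc \<tau>" "\<tau> ` S \<subseteq> S"
  shows "induces_coord_perm S n enc (\<lambda>v. \<sigma> (\<tau> v))"
proof -
  obtain \<pi>1 \<pi>2 where
    \<pi>1: "bij_betw \<pi>1 {..<n} {..<n}" "\<forall>v\<in>S. \<forall>i<n. enc (\<sigma> v) $ i = enc v $ \<pi>1 i" and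
    \<pi>2: "bij_betw \<pi>2 {..<n} {..<n}" "\<forall>v\<in>S. \<forall>i<n. enc (\<tau> v) $ i = enc v $ \<pi>2 i"
    using assms(1,2) unfolding induces_coord_perm_def by blast
  have "enc (\<sigma> (\<tau> v)) $ i = enc v $ (\<pi>2 \<circ> \<pi>1) i" if v: "v \<in> S" and i: "i < n" for v i
  proof -
    have "\<tau> v \<in> S" "\<pi>1 i < n" using assms(3) v \<pi>1(1) i by (auto dest: bij_betwE)
    then show ?thesis using \<pi>1(2) \<pi>2(2) v i by simp
  qed
  then show ?thesis
    unfolding induces_coord_perm_def using bij_betw_trans[OF \<pi>1(1) \<pi>2(1)] by blast
qed

lemma induces_coord_perm_inv:
  assumes \<sigma>: "bij_betw \<sigma> S S" and "induces_coord_perm S n enc \<sigma>"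
  shows "induces_coord_perm S n enc (inv_into S \<sigma>)"
proof -
  obtain \<pi> where \<pi>: "bij_betw \<pi> {..<n} {..<n}" "\<forall>v\<in>S. \<forall>i<n. enc (\<sigma> v) $ i = enc v $ \<pi> i"
    using assms(2) unfolding induces_coord_perm_def by blast
  have "enc (inv_into S \<sigma> v) $ i = enc v $ inv_into {..<n} \<pi> i" if v: "v \<in> S" and i: "i < n" for v i
  proof -
    have "inv_into S \<sigma> v \<in> S" "\<sigma> (inv_into S \<sigma> v) = v"
      using bij_betw_inv_into[OF \<sigma>] bij_betw_inv_into_right[OF \<sigma>] v by (auto dest: bij_betwE)
    moreover have "inv_into {..<n} \<pi> i < n" "\<pi> (inv_into {..<n} \<pi> i) = i"
      using bij_betw_inv_into[OF \<pi>(1)] bij_betw_inv_into_right[OF \<pi>(1)] i by (auto dest: bij_betwE)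
    ultimately show ?thesis using \<pi>(2) by metis
  qed
  then show ?thesis
    unfolding induces_coord_perm_def using bij_betw_inv_into[OF \<pi>(1)] by blast
qed

lemma generate_BijGroup_induces_coord_perm:
  assumes "\<sigma> \<in> generate (BijGroup S) H" "H \<subseteq> Bij S" "\<And>h. h \<in> H \<Longrightarrow> induces_coord_perm S n enc h"
  shows "induces_coord_perm S n enc \<sigma>"
  using assms(1)
proof (induction rule: generate.induct)
  case one
  have "\<one>\<^bsub>BijGroup S\<^esub> = (\<lambda>x \<in> S. x)" by (simp add: BijGroup_def)
  then show ?case by (auto intro: induces_coord_perm_cong[OF induces_coord_perm_id])
next
  case (incl h)
  then show ?case using assms(3) by blast
next
  case (inv h)
  then have h: "h \<in> Bij S" using assms(2) by blast
  then have "bij_betw h S S" by (simp add: Bij_def)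
  then have "induces_coord_perm S n enc (inv_into S h)"
    using assms(3)[OF inv] by (rule induces_coord_perm_inv)
  then show ?case
    unfolding inv_BijGroup[OF h] by (rule induces_coord_perm_cong) simp
next
  case (eng h1 h2)
  have "generate (BijGroup S) H \<subseteq> Bij S"
    using group.generate_incl[OF group_BijGroup, of H S] assms(2) by (simp add: BijGroup_def)
  then have "h1 \<in> Bij S" "h2 \<in> Bij S" using eng(1,2) by auto
  then have "h1 \<otimes>\<^bsub>BijGroup S\<^esub> h2 = compose S h1 h2" "h2 ` S \<subseteq> S"
    by (simp_all add: BijGroup_def Bij_imp_funcset image_subset_iff_funcset)
  moreover have "induces_coord_perm S n enc (\<lambda>v. h1 (h2 v))"
    using induces_coord_perm_comp[OF eng(3,4)] calculation(2) .
  ultimately show ?case by (auto intro: induces_coord_perm_cong simp: compose_def)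
qed

lemma permutation_matrix:
  assumes \<pi>: "bij_betw \<pi> {..<n} {..<n}"
  obtains A :: "'a :: field mat" where "A \<in> carrier_mat n n" "invertible_mat A"
    "\<And>w. dim_vec w = n \<Longrightarrow> A *\<^sub>v w = vec n (\<lambda>i. w $ \<pi> i)"
proof
  define A :: "'a mat" where "A = mat n n (\<lambda>(i, j). if j = \<pi> i then 1 else 0)"
  define B :: "'a mat" where "B = mat n n (\<lambda>(i, j). if i = \<pi> j then 1 else 0)"
  show A: "A \<in> carrier_mat n n" unfolding A_def by simp
  have B: "B \<in> carrier_mat n n" unfolding B_def by simp
  have \<pi>_less: "\<pi> i < n" if "i < n" for i using \<pi> that by (auto dest: bij_betwE)
  have indicator_sum: "(\<Sum>j\<in>{0..<n}. (if j = \<pi> i then 1 else 0) * f j) = f (\<pi> i)"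
    if "i < n" for i and f :: "nat \<Rightarrow> 'a"
    using \<pi>_less[OF that] by (simp add: if_distrib[of "\<lambda>x. x * _"] sum.delta' cong: if_cong)
  show "A *\<^sub>v w = vec n (\<lambda>i. w $ \<pi> i)" if w: "dim_vec w = n" for w
  proof (rule eq_vecI)
    fix i assume "i < dim_vec (vec n (\<lambda>i. w $ \<pi> i))"
    then have i: "i < n" by simp
    have "(A *\<^sub>v w) $ i = (\<Sum>j\<in>{0..<n}. (if j = \<pi> i then 1 else 0) * w $ j)"
      using i w by (simp add: A_def scalar_prod_def)
    then show "(A *\<^sub>v w) $ i = vec n (\<lambda>i. w $ \<pi> i) $ i" using i indicator_sum by simp
  qed (simp add: A_def)
  have AB: "A * B = 1\<^sub>m n"
  proof (rule eq_matI)
    fix i l assume "i < dim_row (1\<^sub>m n)" "l < dim_col (1\<^sub>m n)"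
    then have i: "i < n" and l: "l < n" by auto
    have "(A * B) $$ (i, l) = (\<Sum>j\<in>{0..<n}. (if j = \<pi> i then 1 else 0) * (if j = \<pi> l then 1 else 0))"
      using i l by (simp add: A_def B_def scalar_prod_def)
    also have "\<dots> = (if \<pi> i = \<pi> l then 1 else 0)" using indicator_sum[OF i] by simp
    also have "\<dots> = (if i = l then 1 else 0)"
      using \<pi> i l by (auto simp: bij_betw_def inj_on_def)
    finally show "(A * B) $$ (i, l) = 1\<^sub>m n $$ (i, l)" using i l by simp
  qed (simp_all add: A_def B_def)
  then have "B * A = 1\<^sub>m n" by (rule mat_mult_left_right_inverse[OF A B])
  then show "invertible_mat A"
    unfolding invertible_mat_def inverts_mat_def using A B AB by (intro conjI exI[of _ B]) auto
qed

lemma induces_coord_perm_matrix: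
  fixes enc :: "'a \<Rightarrow> 'b :: field vec"
  assumes "induces_coord_perm S n enc \<sigma>" "\<And>v. dim_vec (enc v) = n"
  shows "\<exists>A \<in> carrier_mat n n. invertible_mat A \<and> (\<forall>v \<in> S. enc (\<sigma> v) = A *\<^sub>v enc v)"
proof -
  obtain \<pi> where \<pi>: "bij_betw \<pi> {..<n} {..<n}" "\<forall>v\<in>S. \<forall>i<n. enc (\<sigma> v) $ i = enc v $ \<pi> i"
    using assms(1) unfolding induces_coord_perm_def by blast
  obtain A :: "'b mat" where A: "A \<in> carrier_mat n n" "invertible_mat A"
    "\<And>w. dim_vec w = n \<Longrightarrow> A *\<^sub>v w = vec n (\<lambda>i. w $ \<pi> i)"
    using permutation_matrix[OF \<pi>(1)] by blast
  have "enc (\<sigma> v) = A *\<^sub>v enc v" if "v \<in> S" for v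
    using \<pi>(2) that assms(2) by (auto simp: A(3) intro!: eq_vecI)
  then show ?thesis using A(1,2) by blast
qed

section \<open>The action of G on alpha\<close>

text \<open>Coordinate p of the encoding of byte j of M^k v in alpha(v).\<close>
definition alpha_index :: "nat \<Rightarrow> nat \<Rightarrow> nat \<Rightarrow> nat" where
  "alpha_index k j p = 4096 * k + 256 * j + p"

lemma alpha_index_digits:
  assumes "j < 16" "p < 256"
  shows "alpha_index k j p div 4096 = k" "alpha_index k j p mod 4096 div 256 = j"
    "alpha_index k j p mod 256 = p"
proof -
  have "256 * j + p < 4096" using assms by linarith
  then show "alpha_index k j p div 4096 = k" "alpha_index k j p mod 4096 div 256 = j"
    using assms by (simp_all add: alpha_index_def add.assoc)
  have "alpha_index k j p = p + (16 * k + j) * 256" by (simp add: alpha_index_def)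
  then show "alpha_index k j p mod 256 = p" using assms by (simp only: mod_mult_self1) simp
qed

lemma alpha_index_of_digits:
  "n = alpha_index (n div 4096) (n mod 4096 div 256) (n mod 256)" "n mod 4096 div 256 < 16"
proof -
  have "n mod 4096 = 256 * (n mod 4096 div 256) + n mod 4096 mod 256" by simp
  moreover have "n mod 4096 mod 256 = n mod 256" by (simp add: mod_mod_cancel)
  ultimately show "n = alpha_index (n div 4096) (n mod 4096 div 256) (n mod 256)"
    unfolding alpha_index_def by (metis add.assoc div_mult_mod_eq mult.commute)
  show "n mod 4096 div 256 < 16" by (simp add: less_mult_imp_div_less)
qed

lemma alpha_index_less:
  "k < t \<Longrightarrow> j < 16 \<Longrightarrow> p < 256 \<Longrightarrow> alpha_index k j p < 4096 * t"
  unfolding alpha_index_def by linarith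

lemma aes_alpha_alpha_index:
  "k < aes_order \<Longrightarrow> j < 16 \<Longrightarrow> p < 256 \<Longrightarrow>
    aes_alpha g v $ alpha_index k j p = eps' g ((aes_M ^^ k) v j) p"
  by (simp add: aes_alpha_def alpha_index_less alpha_index_digits)

lemma aes_alpha_induces_coord_perm:
  assumes \<tau>: "bij_betw \<tau> {..<aes_order} {..<aes_order}"
    and \<rho>: "\<And>k j. bij_betw (\<rho> k j) {..<256} {..<256}"
    and \<sigma>: "\<And>v k j p. v \<in> AES_V \<Longrightarrow> k < aes_order \<Longrightarrow> j < 16 \<Longrightarrow> p < 256 \<Longrightarrow>
      eps' g ((aes_M ^^ k) (\<sigma> v) j) p = eps' g ((aes_M ^^ \<tau> k) v j) (\<rho> k j p)"
  shows "induces_coord_perm AES_V (4096 * aes_order) (aes_alpha g) \<sigma>"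
proof -
  let ?N = "4096 * aes_order"
  define \<pi> where "\<pi> n = alpha_index (\<tau> (n div 4096)) (n mod 4096 div 256)
    (\<rho> (n div 4096) (n mod 4096 div 256) (n mod 256))" for n
  have digits: "n div 4096 < aes_order" "n mod 4096 div 256 < 16" "n mod 256 < 256"
    if "n < ?N" for n
    using that alpha_index_of_digits(2) by (auto simp: less_mult_imp_div_less mult.commute)
  have \<tau>_less: "\<tau> k < aes_order" if "k < aes_order" for k using \<tau> that by (auto dest: bij_betwE)
  have \<rho>_less: "\<rho> k j p < 256" if "p < 256" for k j p using \<rho> that by (auto dest: bij_betwE)
  have \<pi>_digits: "\<pi> n div 4096 = \<tau> (n div 4096)" "\<pi> n mod 4096 div 256 = n mod 4096 div 256"
    "\<pi> n mod 256 = \<rho> (n div 4096) (n mod 4096 div 256) (n mod 256)" for n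
    unfolding \<pi>_def using alpha_index_digits[OF alpha_index_of_digits(2) \<rho>_less] by simp_all
  have \<pi>_less: "\<pi> n < ?N" if "n < ?N" for n
    unfolding \<pi>_def using digits[OF that] by (simp add: alpha_index_less \<tau>_less \<rho>_less)
  have "inj_on \<pi> {..<?N}"
  proof
    fix m n assume "m \<in> {..<?N}" "n \<in> {..<?N}" and e: "\<pi> m = \<pi> n"
    then have dm: "m div 4096 < aes_order" "m mod 4096 div 256 < 16" "m mod 256 < 256"
      and dn: "n div 4096 < aes_order" "n mod 4096 div 256 < 16" "n mod 256 < 256"
      using digits by auto
    have \<tau>_inj: "inj_on \<tau> {..<aes_order}" and \<rho>_inj: "inj_on (\<rho> k j) {..<256}" for k j
      using \<tau> \<rho> by (auto simp: bij_betw_def)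
    have "\<pi> m div 4096 = \<pi> n div 4096" "\<pi> m mod 4096 div 256 = \<pi> n mod 4096 div 256"
      "\<pi> m mod 256 = \<pi> n mod 256"
      using e by simp_all
    then have "\<tau> (m div 4096) = \<tau> (n div 4096)" and j: "m mod 4096 div 256 = n mod 4096 div 256"
      and \<rho>e: "\<rho> (m div 4096) (m mod 4096 div 256) (m mod 256) = \<rho> (n div 4096) (n mod 4096 div 256) (n mod 256)"
      by (simp_all only: \<pi>_digits)
    then have k: "m div 4096 = n div 4096" using inj_on_eq_iff[OF \<tau>_inj] dm(1) dn(1) by simp
    then have "m mod 256 = n mod 256" using inj_on_eq_iff[OF \<rho>_inj] \<rho>e j dm(3) dn(3) by simp
    then show "m = n" using alpha_index_of_digits(1)[of m] alpha_index_of_digits(1)[of n] k j by simp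
  qed
  then have \<pi>_bij: "bij_betw \<pi> {..<?N} {..<?N}"
    using \<pi>_less by (intro bij_betw_endo) auto
  have "aes_alpha g (\<sigma> v) $ n = aes_alpha g v $ \<pi> n" if v: "v \<in> AES_V" and n: "n < ?N" for v n
  proof -
    have "aes_alpha g (\<sigma> v) $ n = aes_alpha g (\<sigma> v) $ alpha_index (n div 4096) (n mod 4096 div 256) (n mod 256)"
      using alpha_index_of_digits(1)[of n] by simp
    also have "\<dots> = aes_alpha g v $ \<pi> n"
      using digits[OF n] \<sigma>[OF v] unfolding \<pi>_def
      by (simp add: aes_alpha_alpha_index \<tau>_less \<rho>_less)
    finally show ?thesis .
  qed
  then show ?thesis unfolding induces_coord_perm_def using \<pi>_bij by blast
qed

lemma aes_M_induces_coord_perm: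
  "induces_coord_perm AES_V (4096 * aes_order) (aes_alpha g) aes_M"
proof (rule aes_alpha_induces_coord_perm
    [where \<tau> = "\<lambda>k. if Suc k = aes_order then 0 else Suc k" and \<rho> = "\<lambda>k j p. p"])
  have "inj_on (\<lambda>k. if Suc k = aes_order then 0 else Suc k) {..<aes_order}"
    by (rule inj_onI) (simp split: if_splits)
  moreover have "(\<lambda>k. if Suc k = aes_order then 0 else Suc k) ` {..<aes_order} \<subseteq> {..<aes_order}"
    using aes_order(1) by auto
  ultimately show "bij_betw (\<lambda>k. if Suc k = aes_order then 0 else Suc k) {..<aes_order} {..<aes_order}"
    by (simp add: bij_betw_endo)
  fix v k and j p :: nat assume v: "v \<in> AES_V" and k: "k < aes_order"
  have "(aes_M ^^ k) (aes_M v) = (aes_M ^^ Suc k) v" by (simp add: funpow_swap1)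
  also have "\<dots> = (aes_M ^^ (if Suc k = aes_order then 0 else Suc k)) v"
    using aes_order(2)[OF v] by (simp del: funpow.simps)
  finally show "eps' g ((aes_M ^^ k) (aes_M v) j) p
      = eps' g ((aes_M ^^ (if Suc k = aes_order then 0 else Suc k)) v j) p"
    by simp
qed (simp add: bij_betw_def)

lemma bytewise_induces_coord_perm:
  assumes prim: "gf_primitive g"
    and f: "\<And>k j. bij_betw (f k j) GF GF"
    and \<sigma>: "\<And>v k j. v \<in> AES_V \<Longrightarrow> j < 16 \<Longrightarrow> (aes_M ^^ k) (\<sigma> v) j = f k j ((aes_M ^^ k) v j)"
  shows "induces_coord_perm AES_V (4096 * aes_order) (aes_alpha g) \<sigma>"
proof (rule aes_alpha_induces_coord_perm[where \<tau> = id])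
  let ?\<rho> = "\<lambda>k j. eps_index g \<circ> inv_into GF (f k j) \<circ> inv_into GF (eps_index g)"
  note transport = one_hot_transport[OF bij_betw_eps_index[OF prim] eps'_eq_indicator[OF prim] f]
  show "bij_betw (?\<rho> k j) {..<256} {..<256}" for k j by (rule transport(1))
  fix v k and j p :: nat assume v: "v \<in> AES_V" and j: "j < 16" and p: "p < 256"
  have "(aes_M ^^ k) v j \<in> GF" using funpow_aes_M_in_V[OF v] by (rule AES_V_component)
  then show "eps' g ((aes_M ^^ k) (\<sigma> v) j) p = eps' g ((aes_M ^^ id k) v j) (?\<rho> k j p)"
    using \<sigma>[OF v j] transport(2) p by simp
qed simp

lemma bytewise_bij_betw_V:
  assumes "\<And>i. i < 16 \<Longrightarrow> inj_on (\<phi> i) GF" "\<And>i y. i < 16 \<Longrightarrow> y \<in> GF \<Longrightarrow> \<phi> i y \<in> GF"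
    and "\<And>v i. v \<in> AES_V \<Longrightarrow> \<sigma> v i = (if i < 16 then \<phi> i (v i) else 0)"
  shows "bij_betw \<sigma> AES_V AES_V"
proof -
  have "inj_on \<sigma> AES_V"
  proof
    fix u v assume u: "u \<in> AES_V" and v: "v \<in> AES_V" and e: "\<sigma> u = \<sigma> v"
    show "u = v"
    proof
      fix i
      show "u i = v i"
      proof (cases "i < 16")
        case True
        then have "\<phi> i (u i) = \<phi> i (v i)" "u i \<in> GF" "v i \<in> GF"
          using fun_cong[OF e, of i] u v assms(3) by (auto simp: AES_V_def)
        then show ?thesis using inj_on_eq_iff[OF assms(1)[OF True]] by blast
      next
        case False
        then show ?thesis using u v by (simp add: AES_V_def)
      qed
    qed
  qed
  moreover have "\<sigma> ` AES_V \<subseteq> AES_V" using assms(2,3) by (auto simp: AES_V_def)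
  ultimately show ?thesis using finite_V by (simp add: bij_betw_endo)
qed

lemma G_tilde_bij_coord_perm:
  assumes prim: "gf_primitive g" and "h \<in> G_tilde"
  shows "bij_betw h AES_V AES_V \<and> induces_coord_perm AES_V (4096 * aes_order) (aes_alpha g) h"
proof -
  obtain a c where a: "a \<in> GF" "a \<noteq> 0" and c: "c \<in> GF" and h: "h = gf_affine a c"
    using assms(2) unfolding G_tilde_def gf_affine_def by blast
  have inj: "inj_on (\<lambda>y. gf_mul a y + c) GF"
    using inj_on_gf_mul[OF gf_invertible_nonzero[OF prim a]] by (simp add: inj_on_def)
  have into: "gf_mul a y + c \<in> GF" for y using gf_mul_in_GF c by (rule GF_add)
  show ?thesis unfolding h
  proof
    show "bij_betw (gf_affine a c) AES_V AES_V"
      by (rule bytewise_bij_betw_V[of "\<lambda>_ y. gf_mul a y + c"]) (use inj into in \<open>simp_all add: gf_affine_def\<close>)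
    show "induces_coord_perm AES_V (4096 * aes_order) (aes_alpha g) (gf_affine a c)"
    proof (rule bytewise_induces_coord_perm[OF prim, of "\<lambda>_ _ y. gf_mul a y + c"])
      show "bij_betw (\<lambda>y. gf_mul a y + c) GF GF" by (rule bij_betw_GF[OF inj into])
      show "(aes_M ^^ k) (gf_affine a c v) j = gf_mul a ((aes_M ^^ k) v j) + c" if "j < 16" for v k j
        using that by (simp only: funpow_aes_M_affine[OF c]) (simp add: gf_affine_def)
    qed
  qed
qed

lemma G_bar_bij_coord_perm:
  assumes prim: "gf_primitive g" and "h \<in> G_bar"
  shows "bij_betw h AES_V AES_V \<and> induces_coord_perm AES_V (4096 * aes_order) (aes_alpha g) h"
proof -
  obtain d where d: "d \<in> AES_V" and h: "h = (\<lambda>s i. s i + d i)"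
    using assms(2) unfolding G_bar_def by blast
  have d_GF: "(aes_M ^^ k) d j \<in> GF" for k j
    using funpow_aes_M_in_V[OF d] by (rule AES_V_component)
  have translation: "bij_betw (\<lambda>y. y + c) GF GF" if "c \<in> GF" for c
    by (rule bij_betw_GF) (simp_all add: inj_on_def GF_add that)
  show ?thesis unfolding h
  proof
    show "bij_betw (\<lambda>s i. s i + d i) AES_V AES_V"
    proof (rule bytewise_bij_betw_V[of "\<lambda>i y. y + d i"])
      show "inj_on (\<lambda>y. y + d i) GF" for i by (simp add: inj_on_def)
      show "y + d i \<in> GF" if "i < 16" "y \<in> GF" for i y
        using d that by (simp add: AES_V_def GF_add)
      show "v i + d i = (if i < 16 then v i + d i else 0)" if "v \<in> AES_V" for v i
        using d that by (simp add: AES_V_def)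
    qed
    show "induces_coord_perm AES_V (4096 * aes_order) (aes_alpha g) (\<lambda>s i. s i + d i)"
    proof (rule bytewise_induces_coord_perm[OF prim, of "\<lambda>k j y. y + (aes_M ^^ k) d j"])
      show "bij_betw (\<lambda>y. y + (aes_M ^^ k) d j) GF GF" for k j
        using translation d_GF by blast
      show "(aes_M ^^ k) (\<lambda>i. v i + d i) j = (aes_M ^^ k) v j + (aes_M ^^ k) d j" for v k j
        by (simp add: funpow_aes_M_add)
    qed
  qed
qed

lemma aes_G_induces_coord_perm:
  assumes "gf_primitive g" "\<sigma> \<in> aes_G"
  shows "induces_coord_perm AES_V (4096 * aes_order) (aes_alpha g) \<sigma>"
proof -
  have generator: "bij_betw f AES_V AES_V \<and> induces_coord_perm AES_V (4096 * aes_order) (aes_alpha g) f"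
    if "f \<in> G_tilde \<union> G_bar \<union> {aes_M}" for f
    using that
  proof (elim UnE singletonE)
    show "f \<in> G_tilde \<Longrightarrow> ?thesis" by (rule G_tilde_bij_coord_perm[OF assms(1)])
    show "f \<in> G_bar \<Longrightarrow> ?thesis" by (rule G_bar_bij_coord_perm[OF assms(1)])
    show "f = aes_M \<Longrightarrow> ?thesis" using bij_betw_aes_M aes_M_induces_coord_perm by simp
  qed
  have restricted_generator:
    "h \<in> Bij AES_V \<and> induces_coord_perm AES_V (4096 * aes_order) (aes_alpha g) h"
    if generated: "h \<in> (\<lambda>f. restrict f AES_V) ` (G_tilde \<union> G_bar \<union> {aes_M})" for h
  proof -
    obtain f where f: "f \<in> G_tilde \<union> G_bar \<union> {aes_M}" and h: "h = restrict f AES_V"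
      using generated by blast
    have "restrict f AES_V \<in> Bij AES_V"
      using generator[OF f] by (simp add: Bij_def)
    moreover have "induces_coord_perm AES_V (4096 * aes_order) (aes_alpha g) (restrict f AES_V)"
      by (rule induces_coord_perm_cong[of _ _ _ f]) (use generator[OF f] in simp_all)
    ultimately show ?thesis unfolding h ..
  qed
  show ?thesis
  proof (rule generate_BijGroup_induces_coord_perm)
    show "\<sigma> \<in> generate (BijGroup AES_V) ((\<lambda>f. restrict f AES_V) ` (G_tilde \<union> G_bar \<union> {aes_M}))"
      using assms(2) unfolding aes_G_def .
  qed (use restricted_generator in blast)+
qed

theorem mainTheorem10:
  fixes \<gamma> :: "bit poly" and \<sigma> :: "(nat \<Rightarrow> bit poly) \<Rightarrow> (nat \<Rightarrow> bit poly)"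
  assumes "gf_primitive \<gamma>" and "\<sigma> \<in> aes_G"
  shows "\<exists>A \<in> carrier_mat (4096 * aes_order) (4096 * aes_order).
           invertible_mat A \<and> (\<forall>v \<in> AES_V. aes_alpha \<gamma> (\<sigma> v) = mult_mat_vec A (aes_alpha \<gamma> v))"
  using aes_G_induces_coord_perm[OF assms]
  by (rule induces_coord_perm_matrix) (simp add: aes_alpha_def)

end
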